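(* Let $n$ and $k$ be integers with $1\le k<n/2$. If $A(n,k)\neq B(n,k)$, then $R_j=S_j=T_j$ for all $j\ge3$.
   Context: $\mathrm{DGP}(n,k)$ is the graph with vertex set $\{(u_i,j),(v_i,j): 0\le i\le n-1,\ j\in\{0,1\}\}$ and edges $\{(u_i,j),(u_{i+1},1-j)\}$ (outer edges), $\{(u_i,j),(v_i,1-j)\}$ (spokes, forming the set $\mathcal{S}$), $\{(v_i,j),(v_{i+k},1-j)\}$ (inner edges), subscripts mod $n$ (the canonical double cover of $\mathrm{GP}(n,k)$). $A(n,k)=\mathrm{Aut}(\mathrm{DGP}(n,k))$ and $B(n,k)$ is the setwise stabilizer of $\mathcal{S}$ in $A(n,k)$. For a cycle $C$, $r(C),s(C),t(C)$ are its numbers of outer edges, spokes and inner edges. For $j\ge3$, $\mathcal{C}_j$ is the set of $j$-cycles of $\mathrm{DGP}(n,k)$, and $R_j=\sum_{C\in\mathcal{C}_j}r(C)$, $S_j=\sum_{C\in\mathcal{C}_j}s(C)$, $T_j=\sum_{C\in\mathcal{C}_j}t(C)$. *)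

theory Defs
  imports Main
begin

text \<open>Vertices of DGP(n,k): triples (b, i, j) where b = True means u_i, b = False means v_i,
  i < n is the subscript and j :: bool is the layer (False = 0, True = 1).\<close>

type_synonym dvert = "bool \<times> nat \<times> bool"

definition dgp_verts :: "nat \<Rightarrow> dvert set" where
  "dgp_verts n = {(b, i, j). i < n}"

definition dgp_outer :: "nat \<Rightarrow> dvert set set" where
  "dgp_outer n = {{(True, i, j), (True, (i + 1) mod n, \<not> j)} | i j. i < n}"

definition dgp_spokes :: "nat \<Rightarrow> dvert set set" where
  "dgp_spokes n = {{(True, i, j), (False, i, \<not> j)} | i j. i < n}"

definition dgp_inner :: "nat \<Rightarrow> nat \<Rightarrow> dvert set set" where
  "dgp_inner n k = {{(False, i, j), (False, (i + k) mod n, \<not> j)} | i j. i < n}"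

definition dgp_edges :: "nat \<Rightarrow> nat \<Rightarrow> dvert set set" where
  "dgp_edges n k = dgp_outer n \<union> dgp_spokes n \<union> dgp_inner n k"

definition dgp_aut :: "nat \<Rightarrow> nat \<Rightarrow> (dvert \<Rightarrow> dvert) set" where
  "dgp_aut n k = {f. bij_betw f (dgp_verts n) (dgp_verts n)
      \<and> (\<forall>x. x \<notin> dgp_verts n \<longrightarrow> f x = x)
      \<and> (\<forall>x\<in>dgp_verts n. \<forall>y\<in>dgp_verts n.
            ({x, y} \<in> dgp_edges n k \<longleftrightarrow> {f x, f y} \<in> dgp_edges n k))}"

definition dgp_B :: "nat \<Rightarrow> nat \<Rightarrow> (dvert \<Rightarrow> dvert) set" where
  "dgp_B n k = {f \<in> dgp_aut n k. (\<lambda>e. f ` e) ` dgp_spokes n = dgp_spokes n}"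

definition dgp_cycles :: "nat \<Rightarrow> nat \<Rightarrow> nat \<Rightarrow> dvert set set set" where
  "dgp_cycles n k j = {{{xs ! i, xs ! ((i + 1) mod j)} | i. i < j} | xs.
      length xs = j \<and> distinct xs \<and> set xs \<subseteq> dgp_verts n
      \<and> (\<forall>i < j. {xs ! i, xs ! ((i + 1) mod j)} \<in> dgp_edges n k)}"

definition dgp_R :: "nat \<Rightarrow> nat \<Rightarrow> nat \<Rightarrow> nat" where
  "dgp_R n k j = (\<Sum>C\<in>dgp_cycles n k j. card (C \<inter> dgp_outer n))"

definition dgp_S :: "nat \<Rightarrow> nat \<Rightarrow> nat \<Rightarrow> nat" where
  "dgp_S n k j = (\<Sum>C\<in>dgp_cycles n k j. card (C \<inter> dgp_spokes n))"

definition dgp_T :: "nat \<Rightarrow> nat \<Rightarrow> nat \<Rightarrow> nat" where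
  "dgp_T n k j = (\<Sum>C\<in>dgp_cycles n k j. card (C \<inter> dgp_inner n k))"

end

theory Submission
  imports Defs "HOL-Number_Theory.Cong"
begin

text \<open>Fix j and count, for each edge, the j-cycles through it. Rotations and layer
  swaps are automorphisms acting transitively on each of the three edge classes (outer
  edges, spokes, inner edges), so this count is constant on each class, and double counting
  gives R_j, S_j, T_j as 2n times the three constants. Every automorphism preserves the
  count. An automorphism outside B(n,k) moves some spoke out of the spokes, and also some
  outer and some inner edge out of its class: an automorphism preserving the outer (inner)
  edges preserves the u-vertices (v-vertices), hence the spokes. So each constant equals
  one of the other two, and all three coincide.\<close>

section \<open>Cycles of a graph and the number of cycles through an edge\<close>

definition cycles_of :: "'a set \<Rightarrow> 'a set set \<Rightarrow> nat \<Rightarrow> 'a set set set" where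
  "cycles_of V E j = {{{xs ! i, xs ! ((i + 1) mod j)} | i. i < j} | xs.
      length xs = j \<and> distinct xs \<and> set xs \<subseteq> V
      \<and> (\<forall>i < j. {xs ! i, xs ! ((i + 1) mod j)} \<in> E)}"

definition cycle_count :: "'a set \<Rightarrow> 'a set set \<Rightarrow> nat \<Rightarrow> 'a set \<Rightarrow> nat" where
  "cycle_count V E j e = card {C \<in> cycles_of V E j. e \<in> C}"

lemma cycles_of_subset_Pow:
  assumes "C \<in> cycles_of V E j"
  shows "C \<subseteq> Pow V"
proof -
  obtain xs where C: "C = {{xs ! i, xs ! ((i + 1) mod j)} | i. i < j}"
    and len: "length xs = j" and xs_V: "set xs \<subseteq> V"
    using assms unfolding cycles_of_def by blast
  have "xs ! i \<in> V \<and> xs ! ((i + 1) mod j) \<in> V" if "i < j" for i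
  proof -
    have "(i + 1) mod j < length xs" using that len by simp
    then show ?thesis using that len xs_V nth_mem by blast
  qed
  then show ?thesis unfolding C by blast
qed

lemma finite_cycles_of: "finite V \<Longrightarrow> finite (cycles_of V E j)"
  using cycles_of_subset_Pow by (metis Pow_iff finite_Pow_iff rev_finite_subset subsetI)

lemma image_cycle_in_cycles_of:
  assumes inj: "inj_on g V" and gV: "g ` V \<subseteq> V" and gE: "\<forall>e\<in>E. g ` e \<in> E"
    and C: "C \<in> cycles_of V E j"
  shows "(\<lambda>e. g ` e) ` C \<in> cycles_of V E j"
proof -
  obtain xs where C_eq: "C = {{xs ! i, xs ! ((i + 1) mod j)} | i. i < j}"
    and len: "length xs = j" and dist: "distinct xs" and xs_V: "set xs \<subseteq> V"
    and xs_E: "\<forall>i < j. {xs ! i, xs ! ((i + 1) mod j)} \<in> E"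
    using C unfolding cycles_of_def by blast
  define ys where "ys = map g xs"
  have ys_nth: "i < j \<Longrightarrow> {ys ! i, ys ! ((i + 1) mod j)} = g ` {xs ! i, xs ! ((i + 1) mod j)}"
    for i using len by (simp add: ys_def)
  have C_image: "C = (\<lambda>i. {xs ! i, xs ! ((i + 1) mod j)}) ` {..<j}"
    unfolding C_eq by auto
  have "(\<lambda>e. g ` e) ` C = (\<lambda>i. {ys ! i, ys ! ((i + 1) mod j)}) ` {..<j}"
    unfolding C_image image_image using ys_nth by (intro image_cong) auto
  also have "\<dots> = {{ys ! i, ys ! ((i + 1) mod j)} | i. i < j}"
    by auto
  finally have "(\<lambda>e. g ` e) ` C = {{ys ! i, ys ! ((i + 1) mod j)} | i. i < j}" .
  moreover have "distinct ys"
    using dist inj xs_V by (simp add: ys_def distinct_map inj_on_subset)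
  moreover have "\<forall>i < j. {ys ! i, ys ! ((i + 1) mod j)} \<in> E"
  proof (intro allI impI)
    fix i assume "i < j"
    then show "{ys ! i, ys ! ((i + 1) mod j)} \<in> E"
      unfolding ys_nth[OF \<open>i < j\<close>] using xs_E gE \<open>i < j\<close> by blast
  qed
  moreover have "length ys = j" "set ys \<subseteq> V"
    using len xs_V gV by (auto simp: ys_def)
  ultimately show ?thesis
    unfolding cycles_of_def by blast
qed

text \<open>The image map permutes the finitely many cycles, since it is injective on them.\<close>

lemma cycle_count_image:
  assumes "finite V" and inj: "inj_on g V" and gV: "g ` V \<subseteq> V" and gE: "\<forall>e\<in>E. g ` e \<in> E"
    and e: "e \<subseteq> V"
  shows "cycle_count V E j (g ` e) = cycle_count V E j e"
proof -
  let ?cyc = "cycles_of V E j"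
  let ?\<Phi> = "\<lambda>C. (\<lambda>e. g ` e) ` C"
  have inj_edge: "inj_on (\<lambda>e. g ` e) (Pow V)"
    using inj by (simp add: inj_on_image)
  have inj_cyc: "inj_on ?\<Phi> ?cyc"
    using inj_on_image[of "\<lambda>e. g ` e" ?cyc] inj_on_subset[OF inj_edge] cycles_of_subset_Pow
    by (metis Union_least)
  have perm: "?\<Phi> ` ?cyc = ?cyc"
    using endo_inj_surj[OF finite_cycles_of[OF \<open>finite V\<close>] _ inj_cyc]
      image_cycle_in_cycles_of[OF inj gV gE] by blast
  have "{C \<in> ?cyc. g ` e \<in> C} = ?\<Phi> ` {C \<in> ?cyc. e \<in> C}"
  proof (intro equalityI subsetI)
    fix C' assume C': "C' \<in> {C \<in> ?cyc. g ` e \<in> C}"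
    then obtain C where C: "C \<in> ?cyc" "C' = ?\<Phi> C"
      using perm by (metis (no_types, lifting) imageE mem_Collect_eq)
    then obtain e' where e': "e' \<in> C" "g ` e = g ` e'"
      using C' by blast
    have "e = e'"
      using inj_onD[OF inj_edge e'(2)] e e' C(1) cycles_of_subset_Pow by blast
    then show "C' \<in> ?\<Phi> ` {C \<in> ?cyc. e \<in> C}" using C e' by blast
  qed (use perm in blast)
  moreover have "inj_on ?\<Phi> {C \<in> ?cyc. e \<in> C}"
    using inj_cyc by (rule inj_on_subset) blast
  ultimately show ?thesis
    unfolding cycle_count_def by (simp add: card_image)
qed

lemma sum_card_Int_eq_sum_card_containing:
  assumes "finite \<C>" and "finite X"
  shows "(\<Sum>C\<in>\<C>. card (C \<inter> X)) = (\<Sum>e\<in>X. card {C \<in> \<C>. e \<in> C})"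
proof -
  have "(\<Sum>C\<in>\<C>. card (C \<inter> X)) = (\<Sum>C\<in>\<C>. \<Sum>e\<in>X. if e \<in> C then 1 else 0)"
    using assms(2) by (intro sum.cong refl) (simp add: sum.If_cases Int_commute)
  also have "\<dots> = (\<Sum>e\<in>X. \<Sum>C\<in>\<C>. if e \<in> C then 1 else 0)"
    by (rule sum.swap)
  also have "\<dots> = (\<Sum>e\<in>X. card {C \<in> \<C>. e \<in> C})"
    using assms(1) by (intro sum.cong refl) (simp add: sum.If_cases Int_def)
  finally show ?thesis .
qed

lemma sum_card_Int_cycles_of_const:
  assumes "finite V" and "finite X" and "\<forall>e\<in>X. cycle_count V E j e = c"
  shows "(\<Sum>C\<in>cycles_of V E j. card (C \<inter> X)) = card X * c"
  using assms sum_card_Int_eq_sum_card_containing[OF finite_cycles_of[OF \<open>finite V\<close>]]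
  unfolding cycle_count_def by simp

section \<open>The edge classes of DGP(n,k)\<close>

lemma add_mod_cancel_right_nat:
  fixes i i' m n :: nat
  assumes "i < n" "i' < n" "(i + m) mod n = (i' + m) mod n"
  shows "i = i'"
  using assms by (metis cong_add_rcancel_nat cong_def mod_less)

lemma mod_add_mod_add_neq:
  fixes i a n :: nat
  assumes "i < n" "0 < a" "2 * a < n"
  shows "((i + a) mod n + a) mod n \<noteq> i"
proof
  assume "((i + a) mod n + a) mod n = i"
  moreover have "((i + a) mod n + a) mod n = (i + (a + a)) mod n"
    by (simp add: mod_add_left_eq add.assoc)
  ultimately have "[i + (a + a) = i + 0] (mod n)"
    using assms(1) by (simp add: cong_def)
  then have "n dvd 2 * a"
    using cong_add_lcancel_nat cong_0_iff mult_2 by metis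
  then show False using assms(2,3) by (simp add: nat_dvd_not_less)
qed

text \<open>Outer and inner edges are both of the form (c, i, j) -- (c, i + a, 1 - j): with
  c = True and a = 1 they are the outer edges, with c = False and a = k the inner ones.\<close>

definition dgp_rim_edge :: "nat \<Rightarrow> bool \<Rightarrow> nat \<Rightarrow> nat \<Rightarrow> bool \<Rightarrow> dvert set" where
  "dgp_rim_edge n c a i j = {(c, i, j), (c, (i + a) mod n, \<not> j)}"

definition dgp_rim :: "nat \<Rightarrow> bool \<Rightarrow> nat \<Rightarrow> dvert set set" where
  "dgp_rim n c a = (\<lambda>(i, j). dgp_rim_edge n c a i j) ` ({..<n} \<times> UNIV)"

definition dgp_spoke :: "nat \<Rightarrow> bool \<Rightarrow> dvert set" where
  "dgp_spoke i j = {(True, i, j), (False, i, \<not> j)}"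

lemma dgp_outer_eq_rim: "dgp_outer n = dgp_rim n True 1"
  unfolding dgp_outer_def dgp_rim_def dgp_rim_edge_def by auto

lemma dgp_inner_eq_rim: "dgp_inner n k = dgp_rim n False k"
  unfolding dgp_inner_def dgp_rim_def dgp_rim_edge_def by auto

lemma dgp_spokes_eq: "dgp_spokes n = (\<lambda>(i, j). dgp_spoke i j) ` ({..<n} \<times> UNIV)"
  unfolding dgp_spokes_def dgp_spoke_def by auto

lemma dgp_rim_edge_in_rim: "i < n \<Longrightarrow> dgp_rim_edge n c a i j \<in> dgp_rim n c a"
  unfolding dgp_rim_def by auto

lemma dgp_spoke_in_spokes: "i < n \<Longrightarrow> dgp_spoke i j \<in> dgp_spokes n"
  unfolding dgp_spokes_eq by auto

lemma finite_dgp_verts: "finite (dgp_verts n)"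
proof -
  have "dgp_verts n = UNIV \<times> {..<n} \<times> UNIV" unfolding dgp_verts_def by auto
  then show ?thesis by simp
qed

lemma finite_dgp_rim: "finite (dgp_rim n c a)"
  unfolding dgp_rim_def by simp

lemma finite_dgp_spokes: "finite (dgp_spokes n)"
  unfolding dgp_spokes_eq by simp

lemma card_dgp_rim:
  assumes "0 < a" and "2 * a < n"
  shows "card (dgp_rim n c a) = 2 * n"
proof -
  have "inj_on (\<lambda>(i, j). dgp_rim_edge n c a i j) ({..<n} \<times> UNIV)"
  proof (rule inj_onI, clarsimp)
    fix i j i' j' assume "i < n" "i' < n" "dgp_rim_edge n c a i j = dgp_rim_edge n c a i' j'"
    then show "i = i' \<and> j = j'"
      using mod_add_mod_add_neq[OF \<open>i < n\<close> assms]
      unfolding dgp_rim_edge_def doubleton_eq_iff prod.inject by metis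
  qed
  then show ?thesis
    unfolding dgp_rim_def by (simp add: card_image card_cartesian_product)
qed

lemma card_dgp_spokes: "card (dgp_spokes n) = 2 * n"
proof -
  have "inj_on (\<lambda>(i, j). dgp_spoke i j) ({..<n} \<times> UNIV)"
    by (rule inj_onI) (auto simp: dgp_spoke_def doubleton_eq_iff)
  then show ?thesis
    unfolding dgp_spokes_eq by (simp add: card_image card_cartesian_product)
qed

lemma dgp_edge_subset_verts: "e \<in> dgp_edges n k \<Longrightarrow> e \<subseteq> dgp_verts n"
  unfolding dgp_edges_def dgp_outer_def dgp_spokes_def dgp_inner_def dgp_verts_def by auto

lemma dgp_rim_edge_sides: "e \<in> dgp_rim n c a \<Longrightarrow> x \<in> e \<Longrightarrow> fst x = c"
  unfolding dgp_rim_def dgp_rim_edge_def by auto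

lemma dgp_edge_across_sides_is_spoke:
  assumes "e \<in> dgp_edges n k" "x \<in> e" "y \<in> e" "fst x \<noteq> fst y"
  shows "e \<in> dgp_spokes n"
proof (rule ccontr)
  assume "e \<notin> dgp_spokes n"
  then obtain c a where "e \<in> dgp_rim n c a"
    using assms(1) unfolding dgp_edges_def dgp_outer_eq_rim dgp_inner_eq_rim by blast
  then have "fst x = c" "fst y = c"
    using assms(2,3) dgp_rim_edge_sides by blast+
  then show False using assms(4) by simp
qed

section \<open>Rotations and layer swaps\<close>

definition dgp_shift :: "nat \<Rightarrow> nat \<Rightarrow> bool \<Rightarrow> dvert \<Rightarrow> dvert" where
  "dgp_shift n m b = (\<lambda>(c, i, j). (c, (i + m) mod n, j \<noteq> b))"

lemma dgp_shift_verts: "dgp_shift n m b ` dgp_verts n \<subseteq> dgp_verts n"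
  unfolding dgp_shift_def dgp_verts_def by auto

lemma inj_on_dgp_shift: "inj_on (dgp_shift n m b) (dgp_verts n)"
  by (rule inj_onI) (auto simp: dgp_shift_def dgp_verts_def dest: add_mod_cancel_right_nat)

lemma dgp_shift_rim_edge:
  "dgp_shift n m b ` dgp_rim_edge n c a i j = dgp_rim_edge n c a ((i + m) mod n) (j \<noteq> b)"
proof -
  have "((i + a) mod n + m) mod n = ((i + m) mod n + a) mod n"
    by (simp add: mod_simps ac_simps)
  then show ?thesis unfolding dgp_shift_def dgp_rim_edge_def by auto
qed

lemma dgp_shift_spoke: "dgp_shift n m b ` dgp_spoke i j = dgp_spoke ((i + m) mod n) (j \<noteq> b)"
  unfolding dgp_shift_def dgp_spoke_def by auto

lemma dgp_shift_rim:
  assumes "e \<in> dgp_rim n c a"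
  shows "dgp_shift n m b ` e \<in> dgp_rim n c a"
proof -
  obtain i j where "i < n" "e = dgp_rim_edge n c a i j"
    using assms unfolding dgp_rim_def by auto
  then show ?thesis
    by (simp add: dgp_shift_rim_edge dgp_rim_edge_in_rim)
qed

lemma dgp_shift_spokes:
  assumes "e \<in> dgp_spokes n"
  shows "dgp_shift n m b ` e \<in> dgp_spokes n"
proof -
  obtain i j where "i < n" "e = dgp_spoke i j"
    using assms unfolding dgp_spokes_eq by auto
  then show ?thesis
    by (simp add: dgp_shift_spoke dgp_spoke_in_spokes)
qed

lemma dgp_shift_edges: "e \<in> dgp_edges n k \<Longrightarrow> dgp_shift n m b ` e \<in> dgp_edges n k"
  unfolding dgp_edges_def dgp_outer_eq_rim dgp_inner_eq_rim
  using dgp_shift_rim dgp_shift_spokes by blast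

abbreviation dgp_cycle_count :: "nat \<Rightarrow> nat \<Rightarrow> nat \<Rightarrow> dvert set \<Rightarrow> nat" where
  "dgp_cycle_count n k j \<equiv> cycle_count (dgp_verts n) (dgp_edges n k) j"

lemma dgp_cycle_count_shift:
  assumes "e \<subseteq> dgp_verts n"
  shows "dgp_cycle_count n k j (dgp_shift n m b ` e) = dgp_cycle_count n k j e"
  by (rule cycle_count_image[OF finite_dgp_verts inj_on_dgp_shift dgp_shift_verts _ assms])
    (simp add: dgp_shift_edges)

lemma dgp_cycle_count_rim:
  assumes "e \<in> dgp_rim n c a"
  shows "dgp_cycle_count n k j e = dgp_cycle_count n k j (dgp_rim_edge n c a 0 False)"
proof -
  obtain i j' where "i < n" and e: "e = dgp_rim_edge n c a i j'"
    using assms unfolding dgp_rim_def by auto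
  then have "e = dgp_shift n i j' ` dgp_rim_edge n c a 0 False"
    by (simp add: dgp_shift_rim_edge)
  moreover have "dgp_rim_edge n c a 0 False \<subseteq> dgp_verts n"
    using \<open>i < n\<close> unfolding dgp_rim_edge_def dgp_verts_def by auto
  ultimately show ?thesis using dgp_cycle_count_shift by metis
qed

lemma dgp_cycle_count_spoke:
  assumes "e \<in> dgp_spokes n"
  shows "dgp_cycle_count n k j e = dgp_cycle_count n k j (dgp_spoke 0 False)"
proof -
  obtain i j' where "i < n" and e: "e = dgp_spoke i j'"
    using assms unfolding dgp_spokes_eq by auto
  then have "e = dgp_shift n i j' ` dgp_spoke 0 False"
    by (simp add: dgp_shift_spoke)
  moreover have "dgp_spoke 0 False \<subseteq> dgp_verts n"
    using \<open>i < n\<close> unfolding dgp_spoke_def dgp_verts_def by auto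
  ultimately show ?thesis using dgp_cycle_count_shift by metis
qed

lemma dgp_cycles_eq_cycles_of: "dgp_cycles n k j = cycles_of (dgp_verts n) (dgp_edges n k) j"
  unfolding dgp_cycles_def cycles_of_def by simp

lemma dgp_sum_card_Int_rim:
  assumes "0 < a" and "2 * a < n"
  shows "(\<Sum>C\<in>dgp_cycles n k j. card (C \<inter> dgp_rim n c a))
    = 2 * n * dgp_cycle_count n k j (dgp_rim_edge n c a 0 False)"
proof -
  have "\<forall>e\<in>dgp_rim n c a.
      dgp_cycle_count n k j e = dgp_cycle_count n k j (dgp_rim_edge n c a 0 False)"
    using dgp_cycle_count_rim by blast
  then show ?thesis
    unfolding dgp_cycles_eq_cycles_of card_dgp_rim[OF assms, where c = c, symmetric]
    by (simp add: sum_card_Int_cycles_of_const finite_dgp_verts finite_dgp_rim)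
qed

lemma dgp_R_eq:
  "2 < n \<Longrightarrow> dgp_R n k j = 2 * n * dgp_cycle_count n k j (dgp_rim_edge n True 1 0 False)"
  unfolding dgp_R_def dgp_outer_eq_rim by (rule dgp_sum_card_Int_rim) simp_all

lemma dgp_S_eq: "dgp_S n k j = 2 * n * dgp_cycle_count n k j (dgp_spoke 0 False)"
proof -
  have "\<forall>e\<in>dgp_spokes n.
      dgp_cycle_count n k j e = dgp_cycle_count n k j (dgp_spoke 0 False)"
    using dgp_cycle_count_spoke by blast
  then show ?thesis
    unfolding dgp_S_def dgp_cycles_eq_cycles_of card_dgp_spokes[symmetric]
    by (simp add: sum_card_Int_cycles_of_const finite_dgp_verts finite_dgp_spokes)
qed

lemma dgp_T_eq:
  "0 < k \<Longrightarrow> 2 * k < n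
    \<Longrightarrow> dgp_T n k j = 2 * n * dgp_cycle_count n k j (dgp_rim_edge n False k 0 False)"
  unfolding dgp_T_def dgp_inner_eq_rim by (rule dgp_sum_card_Int_rim)

section \<open>Automorphisms outside the stabiliser of the spokes\<close>

lemma dgp_aut_bij: "f \<in> dgp_aut n k \<Longrightarrow> bij_betw f (dgp_verts n) (dgp_verts n)"
  unfolding dgp_aut_def by blast

lemma dgp_aut_edges:
  assumes "f \<in> dgp_aut n k" "e \<in> dgp_edges n k"
  shows "f ` e \<in> dgp_edges n k"
proof -
  obtain x y where e: "e = {x, y}"
    using assms(2) unfolding dgp_edges_def dgp_outer_def dgp_spokes_def dgp_inner_def by blast
  then have "x \<in> dgp_verts n" "y \<in> dgp_verts n"
    using dgp_edge_subset_verts[OF assms(2)] by auto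
  then show ?thesis using assms e unfolding dgp_aut_def by auto
qed

lemma dgp_cycle_count_aut:
  assumes "f \<in> dgp_aut n k" "e \<in> dgp_edges n k"
  shows "dgp_cycle_count n k j (f ` e) = dgp_cycle_count n k j e"
  using assms cycle_count_image[OF finite_dgp_verts] dgp_aut_bij[OF assms(1)] dgp_aut_edges
    dgp_edge_subset_verts
  by (simp add: bij_betw_def)

lemma dgp_B_if_spokes_preserved:
  assumes f: "f \<in> dgp_aut n k" and spokes: "\<forall>e\<in>dgp_spokes n. f ` e \<in> dgp_spokes n"
  shows "f \<in> dgp_B n k"
proof -
  have "inj_on (\<lambda>e. f ` e) (Pow (dgp_verts n))"
    using dgp_aut_bij[OF f] by (simp add: bij_betw_def inj_on_image)
  moreover have "dgp_spokes n \<subseteq> Pow (dgp_verts n)"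
    using dgp_edge_subset_verts unfolding dgp_edges_def by blast
  ultimately have "inj_on (\<lambda>e. f ` e) (dgp_spokes n)"
    using inj_on_subset by blast
  then have "(\<lambda>e. f ` e) ` dgp_spokes n = dgp_spokes n"
    using endo_inj_surj[OF finite_dgp_spokes] spokes by blast
  then show ?thesis using f unfolding dgp_B_def by blast
qed

lemma bij_betw_preserves_complement:
  assumes "finite V" "bij_betw f V V" "U \<subseteq> V" "f ` U \<subseteq> U" "x \<in> V - U"
  shows "f x \<in> V - U"
proof -
  have inj: "inj_on f V" using assms(2) by (rule bij_betw_imp_inj_on)
  have "f ` U = U"
    using endo_inj_surj[OF finite_subset[OF assms(3,1)] assms(4) inj_on_subset[OF inj assms(3)]] .
  moreover have "f x \<notin> f ` U"
    using inj assms(3,5) by (auto dest: inj_onD)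
  moreover have "f x \<in> V"
    using assms(2,5) bij_betwE by blast
  ultimately show ?thesis by blast
qed

text \<open>An automorphism mapping one side (the u- or the v-vertices) into itself fixes
  both sides, so it maps spokes, the only edges across the sides, to spokes.\<close>

lemma dgp_B_if_side_preserved:
  assumes f: "f \<in> dgp_aut n k" and side: "\<forall>x\<in>dgp_verts n. fst x = c \<longrightarrow> fst (f x) = c"
  shows "f \<in> dgp_B n k"
proof (rule dgp_B_if_spokes_preserved[OF f], rule ballI)
  let ?U = "{x \<in> dgp_verts n. fst x = c}"
  have "f ` ?U \<subseteq> ?U"
    using side bij_betwE[OF dgp_aut_bij[OF f]] by blast
  then have fst_f: "fst (f x) = fst x" if "x \<in> dgp_verts n" for x
    using side bij_betw_preserves_complement[OF finite_dgp_verts dgp_aut_bij[OF f], of ?U x] that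
    by (cases "fst x = c") auto
  fix e assume e: "e \<in> dgp_spokes n"
  then obtain i j where "i < n" and e_eq: "e = dgp_spoke i j"
    unfolding dgp_spokes_eq by auto
  then have "fst (f (True, i, j)) = True" "fst (f (False, i, \<not> j)) = False"
    using fst_f unfolding dgp_verts_def by auto
  moreover have "f (True, i, j) \<in> f ` e" "f (False, i, \<not> j) \<in> f ` e"
    unfolding e_eq dgp_spoke_def by auto
  moreover have "f ` e \<in> dgp_edges n k"
    using dgp_aut_edges[OF f] e unfolding dgp_edges_def by blast
  ultimately show "f ` e \<in> dgp_spokes n"
    using dgp_edge_across_sides_is_spoke by (metis (full_types))
qed

lemma dgp_B_if_rim_preserved:
  assumes f: "f \<in> dgp_aut n k" and rim: "\<forall>e\<in>dgp_rim n c a. f ` e \<in> dgp_rim n c a"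
  shows "f \<in> dgp_B n k"
proof (rule dgp_B_if_side_preserved[OF f], intro ballI impI)
  fix x assume "x \<in> dgp_verts n" "fst x = c"
  then obtain i j where "i < n" "x = (c, i, j)"
    unfolding dgp_verts_def by auto
  then have "f x \<in> f ` dgp_rim_edge n c a i j"
    unfolding dgp_rim_edge_def by simp
  moreover have "f ` dgp_rim_edge n c a i j \<in> dgp_rim n c a"
    using rim dgp_rim_edge_in_rim[OF \<open>i < n\<close>] by blast
  ultimately show "fst (f x) = c"
    using dgp_rim_edge_sides by blast
qed

lemma dgp_cycle_counts_eq:
  fixes j :: nat
  assumes f: "f \<in> dgp_aut n k" "f \<notin> dgp_B n k"
  defines "N \<equiv> dgp_cycle_count n k j"
  shows "N (dgp_rim_edge n True 1 0 False) = N (dgp_spoke 0 False)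
    \<and> N (dgp_spoke 0 False) = N (dgp_rim_edge n False k 0 False)"
proof -
  define a b c where "a = N (dgp_rim_edge n True 1 0 False)" and "b = N (dgp_spoke 0 False)"
    and "c = N (dgp_rim_edge n False k 0 False)"
  have outer: "N e = a" if "e \<in> dgp_outer n" for e
    using that dgp_cycle_count_rim unfolding a_def N_def dgp_outer_eq_rim by blast
  have spoke: "N e = b" if "e \<in> dgp_spokes n" for e
    using that dgp_cycle_count_spoke unfolding b_def N_def by blast
  have inner: "N e = c" if "e \<in> dgp_inner n k" for e
    using that dgp_cycle_count_rim unfolding c_def N_def dgp_inner_eq_rim by blast
  have moved: "N (f ` e) = N e" if "e \<in> dgp_edges n k" for e
    using dgp_cycle_count_aut[OF f(1) that] unfolding N_def .
  have image_edge: "f ` e \<in> dgp_edges n k" if "e \<in> dgp_edges n k" for e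
    using dgp_aut_edges[OF f(1) that] .
  obtain e\<^sub>1 where e\<^sub>1: "e\<^sub>1 \<in> dgp_outer n" "f ` e\<^sub>1 \<notin> dgp_outer n"
    using dgp_B_if_rim_preserved[OF f(1), of True 1] f(2) unfolding dgp_outer_eq_rim by blast
  obtain e\<^sub>2 where e\<^sub>2: "e\<^sub>2 \<in> dgp_spokes n" "f ` e\<^sub>2 \<notin> dgp_spokes n"
    using dgp_B_if_spokes_preserved[OF f(1)] f(2) by blast
  obtain e\<^sub>3 where e\<^sub>3: "e\<^sub>3 \<in> dgp_inner n k" "f ` e\<^sub>3 \<notin> dgp_inner n k"
    using dgp_B_if_rim_preserved[OF f(1), of False k] f(2) unfolding dgp_inner_eq_rim by blast
  have edges: "e\<^sub>1 \<in> dgp_edges n k" "e\<^sub>2 \<in> dgp_edges n k" "e\<^sub>3 \<in> dgp_edges n k"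
    using e\<^sub>1(1) e\<^sub>2(1) e\<^sub>3(1) unfolding dgp_edges_def by blast+
  have "N (f ` e\<^sub>1) = a" "N (f ` e\<^sub>2) = b" "N (f ` e\<^sub>3) = c"
    using moved[OF edges(1)] moved[OF edges(2)] moved[OF edges(3)]
      outer[OF e\<^sub>1(1)] spoke[OF e\<^sub>2(1)] inner[OF e\<^sub>3(1)] by simp_all
  moreover have "f ` e\<^sub>1 \<in> dgp_spokes n \<union> dgp_inner n k" "f ` e\<^sub>2 \<in> dgp_outer n \<union> dgp_inner n k"
    "f ` e\<^sub>3 \<in> dgp_outer n \<union> dgp_spokes n"
    using image_edge[OF edges(1)] image_edge[OF edges(2)] image_edge[OF edges(3)]
      e\<^sub>1(2) e\<^sub>2(2) e\<^sub>3(2) unfolding dgp_edges_def by blast+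
  ultimately have "a \<in> {b, c}" "b \<in> {a, c}" "c \<in> {a, b}"
    using spoke[of "f ` e\<^sub>1"] inner[of "f ` e\<^sub>1"] outer[of "f ` e\<^sub>2"]
      inner[of "f ` e\<^sub>2"] outer[of "f ` e\<^sub>3"] spoke[of "f ` e\<^sub>3"]
    by auto
  then have "a = b" "b = c"
    by auto
  then show ?thesis
    unfolding a_def b_def c_def by (rule conjI)
qed

theorem lemma5p7:
  fixes n k :: nat
  assumes "1 \<le> k" and "2 * k < n"
    and "dgp_aut n k \<noteq> dgp_B n k"
  shows "\<forall>j\<ge>3. dgp_R n k j = dgp_S n k j \<and> dgp_S n k j = dgp_T n k j"
proof (intro allI impI)
  fix j :: nat
  obtain f where f: "f \<in> dgp_aut n k" "f \<notin> dgp_B n k"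
    using assms(3) unfolding dgp_B_def by blast
  show "dgp_R n k j = dgp_S n k j \<and> dgp_S n k j = dgp_T n k j"
    using dgp_R_eq[of n k j] dgp_S_eq[of n k j] dgp_T_eq[of k n j] assms(1,2)
      dgp_cycle_counts_eq[OF f, of j]
    by simp
qed

end
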